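(* Let $(A,\cdot,[-,-])$ be a transposed Poisson algebra and $(\mu,\rho,V)$ a representation of it. Then $(-\mu^*,\rho^*,V^* )$ is a representation of $(A,\cdot,[-,-])$ if and only if $\mu([x,y])=0$ and $\rho(x\cdot y)=\mu(x)\rho(y)$ for all $x,y\in A$. In particular, $(-\mathcal{L}^*_{\cdot},\mathrm{ad}^*,A^* )$ is a representation of $(A,\cdot,[-,-])$ if and only if $[x,y\cdot z]=x\cdot[y,z]=0$ for all $x,y,z\in A$.
   Context: Finite-dimensional spaces, characteristic zero. $\mathcal{L}_\cdot(x)y=x\cdot y$, $\mathrm{ad}(x)y=[x,y]$. For linear $\rho:A\to\mathrm{End}(V)$, $\rho^*:A\to\mathrm{End}(V^* )$ is $\langle\rho^*(x)v^*,u\rangle=-\langle v^*,\rho(x)u\rangle$. Transposed Poisson algebra: $(A,\cdot)$ commutative associative, $(A,[-,-])$ Lie, $2z\cdot[x,y]=[z\cdot x,y]+[x,z\cdot y]$. A representation of a transposed Poisson algebra is $(\mu,\rho,V)$ with $\mu,\rho:A\to\mathrm{End}(V)$ linear, $\mu(x\cdot y)=\mu(x)\mu(y)$, $\rho([x,y])=\rho(x)\rho(y)-\rho(y)\rho(x)$, $2\mu(x)\rho(y)=\rho(x\cdot y)+\rho(y)\mu(x)$ and $2\mu([x,y])=\rho(x)\mu(y)-\rho(y)\mu(x)$ for all $x,y$. *)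

theory Defs
  imports Complex_Main "HOL-Library.Function_Algebras"
begin

definition transposed_poisson ::
  "('k::field \<Rightarrow> 'a::ab_group_add \<Rightarrow> 'a) \<Rightarrow> ('a \<Rightarrow> 'a \<Rightarrow> 'a) \<Rightarrow> ('a \<Rightarrow> 'a \<Rightarrow> 'a) \<Rightarrow> bool"
  where "transposed_poisson sA mult br \<longleftrightarrow>
    vector_space sA \<and>
    \<comment> \<open>bilinearity of both products\<close>
    (\<forall>c x y z. mult (sA c x + y) z = sA c (mult x z) + mult y z) \<and>
    (\<forall>c x y z. mult z (sA c x + y) = sA c (mult z x) + mult z y) \<and>
    (\<forall>c x y z. br (sA c x + y) z = sA c (br x z) + br y z) \<and>
    (\<forall>c x y z. br z (sA c x + y) = sA c (br z x) + br z y) \<and>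
    \<comment> \<open>commutative associative\<close>
    (\<forall>x y. mult x y = mult y x) \<and>
    (\<forall>x y z. mult (mult x y) z = mult x (mult y z)) \<and>
    \<comment> \<open>Lie algebra\<close>
    (\<forall>x. br x x = 0) \<and>
    (\<forall>x y z. br x (br y z) + br y (br z x) + br z (br x y) = 0) \<and>
    \<comment> \<open>compatibility\<close>
    (\<forall>x y z. sA 2 (mult z (br x y)) = br (mult z x) y + br x (mult z y))"

text \<open>A representation (mu, rho, W) of the transposed Poisson algebra on a subspace W
of the vector space given by scalar multiplication sV (W = UNIV for an ordinary space V;
W = the linear functionals for the dual space).\<close>

definition tp_rep ::
  "('k::field \<Rightarrow> 'a::ab_group_add \<Rightarrow> 'a) \<Rightarrow> ('a \<Rightarrow> 'a \<Rightarrow> 'a) \<Rightarrow> ('a \<Rightarrow> 'a \<Rightarrow> 'a) \<Rightarrow>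
   ('k \<Rightarrow> 'v::ab_group_add \<Rightarrow> 'v) \<Rightarrow> 'v set \<Rightarrow> ('a \<Rightarrow> 'v \<Rightarrow> 'v) \<Rightarrow> ('a \<Rightarrow> 'v \<Rightarrow> 'v) \<Rightarrow> bool"
  where "tp_rep sA mult br sV W mu rho \<longleftrightarrow>
    vector_space sV \<and> module.subspace sV W \<and>
    \<comment> \<open>mu x, rho x are endomorphisms of W\<close>
    (\<forall>x. \<forall>w\<in>W. mu x w \<in> W \<and> rho x w \<in> W) \<and>
    (\<forall>x c. \<forall>v\<in>W. \<forall>w\<in>W. mu x (sV c v + w) = sV c (mu x v) + mu x w) \<and>
    (\<forall>x c. \<forall>v\<in>W. \<forall>w\<in>W. rho x (sV c v + w) = sV c (rho x v) + rho x w) \<and>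
    \<comment> \<open>mu, rho are linear maps A \<rightarrow> End(W)\<close>
    (\<forall>c x y. \<forall>w\<in>W. mu (sA c x + y) w = sV c (mu x w) + mu y w) \<and>
    (\<forall>c x y. \<forall>w\<in>W. rho (sA c x + y) w = sV c (rho x w) + rho y w) \<and>
    \<comment> \<open>the four identities\<close>
    (\<forall>x y. \<forall>w\<in>W. mu (mult x y) w = mu x (mu y w)) \<and>
    (\<forall>x y. \<forall>w\<in>W. rho (br x y) w = rho x (rho y w) - rho y (rho x w)) \<and>
    (\<forall>x y. \<forall>w\<in>W. sV 2 (mu x (rho y w)) = rho (mult x y) w + rho y (mu x w)) \<and>
    (\<forall>x y. \<forall>w\<in>W. sV 2 (mu (br x y) w) = rho x (mu y w) - rho y (mu x w))"

definition dual_space :: "('k::field \<Rightarrow> 'v::ab_group_add \<Rightarrow> 'v) \<Rightarrow> ('v \<Rightarrow> 'k) set"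
  where "dual_space sV = {f. Vector_Spaces.linear sV (*) f}"

definition dual_scale :: "'k::field \<Rightarrow> ('v \<Rightarrow> 'k) \<Rightarrow> ('v \<Rightarrow> 'k)"
  where "dual_scale c f = (\<lambda>u. c * f u)"

definition dual_op :: "('a \<Rightarrow> 'v \<Rightarrow> 'v) \<Rightarrow> 'a \<Rightarrow> ('v \<Rightarrow> 'k::field) \<Rightarrow> ('v \<Rightarrow> 'k)"
  where "dual_op rho x f = (\<lambda>u. - f (rho x u))"

end

theory Submission
  imports Defs
begin

text \<open>Dualizing reverses the order of composition, so the first two identities of a
representation always pass to \<open>(-\<mu>\<^sup>*, \<rho>\<^sup>*)\<close> (the first because \<open>\<cdot>\<close> is commutative), while,
as linear functionals separate points, the last two become
\<open>2\<rho>(y)\<mu>(x) = \<rho>(x\<cdot>y) + \<mu>(x)\<rho>(y)\<close> and \<open>2\<mu>([x,y]) = \<mu>(x)\<rho>(y) - \<mu>(y)\<rho>(x)\<close>.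
Subtracting the original third identity gives \<open>3(\<rho>(y)\<mu>(x) - \<mu>(x)\<rho>(y)) = 0\<close>, so \<open>\<mu>(x)\<close> and
\<open>\<rho>(y)\<close> commute and \<open>\<rho>(x\<cdot>y) = \<mu>(x)\<rho>(y)\<close>; then the original fourth identity gives
\<open>4\<mu>([x,y]) = 0\<close>. The second claim is the first one for
the adjoint representation \<open>(\<cdot>, [-,-])\<close> of \<open>A\<close> on itself.\<close>

lemma vector_space_dual_scale: "vector_space (dual_scale :: 'k::field \<Rightarrow> ('v \<Rightarrow> 'k) \<Rightarrow> _)"
  by unfold_locales (auto simp: dual_scale_def algebra_simps fun_eq_iff)

lemma mem_dual_space_iff:
  fixes s :: "'k::field \<Rightarrow> 'v::ab_group_add \<Rightarrow> 'v"
  assumes "vector_space s"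
  shows "f \<in> dual_space s \<longleftrightarrow> (\<forall>x y. f (x + y) = f x + f y) \<and> (\<forall>c x. f (s c x) = c * f x)"
proof -
  have "vector_space ((*) :: 'k::field \<Rightarrow> 'k \<Rightarrow> 'k)"
    by unfold_locales (auto simp: algebra_simps)
  with assms show ?thesis
    by (simp add: dual_space_def Vector_Spaces.linear_iff)
qed

lemma subspace_dual_space:
  assumes "vector_space s"
  shows "module.subspace dual_scale (dual_space s)"
proof -
  interpret dual: vector_space "dual_scale :: 'a \<Rightarrow> ('b \<Rightarrow> 'a) \<Rightarrow> _"
    by (rule vector_space_dual_scale)
  show ?thesis
    by (auto simp: dual.subspace_def mem_dual_space_iff[OF assms] dual_scale_def algebra_simps)
qed

lemma dual_space_separates:
  assumes "vector_space s"
    and "\<And>f. f \<in> dual_space s \<Longrightarrow> f v = f w"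
  shows "v = w"
proof -
  interpret vector_space s by fact
  let ?E = "extend_basis {}"
  have indep: "independent ?E" and spans: "span ?E = UNIV"
    using independent_extend_basis span_extend_basis independent_empty by simp_all
  have "representation ?E (v - w) b = 0" for b
  proof -
    have "(\<lambda>u. representation ?E u b) \<in> dual_space s"
      unfolding dual_space_def using linear_representation[OF indep spans] by simp
    with assms(2) show ?thesis
      by (simp add: representation_diff indep spans)
  qed
  then have "v - w = 0"
    using sum_nonzero_representation_eq[OF indep, of "v - w"] spans by simp
  then show ?thesis
    by simp
qed

locale tp_algebra =
  fixes sA :: "'k::field \<Rightarrow> 'a::ab_group_add \<Rightarrow> 'a"
    and mult br :: "'a \<Rightarrow> 'a \<Rightarrow> 'a"
  assumes transposed_poisson: "transposed_poisson sA mult br"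
begin

sublocale A: vector_space sA
  using transposed_poisson by (simp add: transposed_poisson_def)

lemma mult_linear_left: "mult (sA c x + y) z = sA c (mult x z) + mult y z"
  and mult_linear_right: "mult z (sA c x + y) = sA c (mult z x) + mult z y"
  and br_linear_left: "br (sA c x + y) z = sA c (br x z) + br y z"
  and br_linear_right: "br z (sA c x + y) = sA c (br z x) + br z y"
  and br_self: "br x x = 0"
  and jacobi: "br x (br y z) + br y (br z x) + br z (br x y) = 0"
  and compatibility: "sA 2 (mult z (br x y)) = br (mult z x) y + br x (mult z y)"
  using transposed_poisson by (simp_all add: transposed_poisson_def)

lemma mult_commute: "mult x y = mult y x"
  and mult_assoc: "mult (mult x y) z = mult x (mult y z)"
  using transposed_poisson unfolding transposed_poisson_def by blast+

lemma br_add_left: "br (x + y) z = br x z + br y z"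
  using br_linear_left[where c = 1] by simp

lemma br_add_right: "br z (x + y) = br z x + br z y"
  using br_linear_right[where c = 1] by simp

lemma br_minus_right: "br x (- y) = - br x y"
proof -
  have "br x 0 = 0"
    using br_add_right[of x 0 0] by simp
  then have "br x y + br x (- y) = 0"
    by (simp flip: br_add_right)
  then show ?thesis
    by (simp add: eq_neg_iff_add_eq_0 add.commute)
qed

lemma br_antisym: "br x y = - br y x"
proof -
  have "0 = br (x + y) (x + y)"
    by (simp add: br_self)
  also have "\<dots> = br x y + br y x"
    unfolding br_add_left br_add_right by (simp add: br_self)
  finally show ?thesis
    by (metis eq_neg_iff_add_eq_0)
qed

lemma br_br_left: "br (br x y) z = br x (br y z) - br y (br x z)"
proof -
  have "br (br x y) z = - br z (br x y)"
    by (rule br_antisym)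
  also have "\<dots> = br x (br y z) + br y (br z x)"
    using jacobi[of x y z] by (metis neg_eq_iff_add_eq_0 add.commute)
  also have "br y (br z x) = - br y (br x z)"
    using br_antisym[of z x] br_minus_right by simp
  finally show ?thesis
    by simp
qed

end

locale tp_representation = tp_algebra sA mult br
  for sA :: "'k::field \<Rightarrow> 'a::ab_group_add \<Rightarrow> 'a" and mult br :: "'a \<Rightarrow> 'a \<Rightarrow> 'a" +
  fixes sV :: "'k \<Rightarrow> 'v::ab_group_add \<Rightarrow> 'v"
    and mu rho :: "'a \<Rightarrow> 'v \<Rightarrow> 'v"
  assumes tp_rep: "tp_rep sA mult br sV UNIV mu rho"
begin

sublocale V: vector_space sV
  using tp_rep by (simp add: tp_rep_def)

lemma mu_linear_right: "mu x (sV c v + w) = sV c (mu x v) + mu x w"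
  and rho_linear_right: "rho x (sV c v + w) = sV c (rho x v) + rho x w"
  and mu_linear_left: "mu (sA c x + y) v = sV c (mu x v) + mu y v"
  and rho_linear_left: "rho (sA c x + y) v = sV c (rho x v) + rho y v"
  and mu_mult: "mu (mult x y) v = mu x (mu y v)"
  and rho_br: "rho (br x y) v = rho x (rho y v) - rho y (rho x v)"
  and mu_rho: "sV 2 (mu x (rho y v)) = rho (mult x y) v + rho y (mu x v)"
  and mu_br: "sV 2 (mu (br x y) v) = rho x (mu y v) - rho y (mu x v)"
  using tp_rep by (simp_all add: tp_rep_def)

lemma mu_add: "mu x (v + w) = mu x v + mu x w"
  and rho_add: "rho x (v + w) = rho x v + rho x w"
  using mu_linear_right[where c = 1] rho_linear_right[where c = 1] by simp_all

lemma mu_scale: "mu x (sV c v) = sV c (mu x v)"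
  and rho_scale: "rho x (sV c v) = sV c (rho x v)"
  using mu_linear_right[where w = 0] rho_linear_right[where w = 0]
    mu_add[where v = 0 and w = 0] rho_add[where v = 0 and w = 0]
  by simp_all

lemma tp_rep_dual_iff:
  "tp_rep sA mult br dual_scale (dual_space sV) (\<lambda>x f. - dual_op mu x f) (dual_op rho) \<longleftrightarrow>
    (\<forall>x y v. sV 2 (rho y (mu x v)) = rho (mult x y) v + mu x (rho y v)) \<and>
    (\<forall>x y v. sV 2 (mu (br x y) v) = mu x (rho y v) - mu y (rho x v))"
proof -
  let ?W = "dual_space sV"
  have f_add: "f (v + w) = f v + f w" and f_scale: "f (sV c v) = c * f v"
    if "f \<in> ?W" for f v w c
    using that by (simp_all add: mem_dual_space_iff[OF V.vector_space_axioms])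
  have f_diff: "f (v - w) = f v - f w" if "f \<in> ?W" for f v w
    using f_add[OF that, of "v - w" w] by simp
  have dual_eq_iff: "(\<forall>f\<in>?W. f v = f w) \<longleftrightarrow> v = w" for v w
    using dual_space_separates[OF V.vector_space_axioms] by blast
  have closed: "\<forall>x. \<forall>f\<in>?W. - dual_op mu x f \<in> ?W \<and> dual_op rho x f \<in> ?W"
    by (auto simp: mem_dual_space_iff[OF V.vector_space_axioms] dual_op_def
        mu_add rho_add mu_scale rho_scale)
  have linear_right:
    "\<forall>x c. \<forall>f\<in>?W. \<forall>g\<in>?W. - dual_op mu x (dual_scale c f + g)
        = dual_scale c (- dual_op mu x f) + - dual_op mu x g"
    "\<forall>x c. \<forall>f\<in>?W. \<forall>g\<in>?W. dual_op rho x (dual_scale c f + g)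
        = dual_scale c (dual_op rho x f) + dual_op rho x g"
    by (auto simp: dual_op_def dual_scale_def fun_eq_iff algebra_simps)
  have linear_left:
    "\<forall>c x y. \<forall>f\<in>?W. - dual_op mu (sA c x + y) f
        = dual_scale c (- dual_op mu x f) + - dual_op mu y f"
    "\<forall>c x y. \<forall>f\<in>?W. dual_op rho (sA c x + y) f
        = dual_scale c (dual_op rho x f) + dual_op rho y f"
    by (auto simp: dual_op_def dual_scale_def fun_eq_iff mu_linear_left rho_linear_left f_add f_scale)
  have dual_mu_mult: "\<forall>x y. \<forall>f\<in>?W. - dual_op mu (mult x y) f = - dual_op mu x (- dual_op mu y f)"
  proof (intro allI ballI ext)
    fix x y f u
    show "(- dual_op mu (mult x y) f) u = (- dual_op mu x (- dual_op mu y f)) u"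
      using mu_mult[of y x u] by (simp add: dual_op_def mult_commute[of x y])
  qed
  have dual_rho_br: "\<forall>x y. \<forall>f\<in>?W. dual_op rho (br x y) f
      = dual_op rho x (dual_op rho y f) - dual_op rho y (dual_op rho x f)"
    by (auto simp: dual_op_def fun_eq_iff rho_br f_diff)
  have "tp_rep sA mult br dual_scale ?W (\<lambda>x f. - dual_op mu x f) (dual_op rho) \<longleftrightarrow>
    (\<forall>x y. \<forall>f\<in>?W. dual_scale 2 (- dual_op mu x (dual_op rho y f))
        = dual_op rho (mult x y) f + dual_op rho y (- dual_op mu x f)) \<and>
    (\<forall>x y. \<forall>f\<in>?W. dual_scale 2 (- dual_op mu (br x y) f)
        = dual_op rho x (- dual_op mu y f) - dual_op rho y (- dual_op mu x f))"
    unfolding tp_rep_def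
    using vector_space_dual_scale subspace_dual_space[OF V.vector_space_axioms]
      closed linear_right linear_left dual_mu_mult dual_rho_br
    by auto
  also have "\<dots> \<longleftrightarrow>
    (\<forall>x y v. \<forall>f\<in>?W. f (sV 2 (rho y (mu x v))) = f (rho (mult x y) v + mu x (rho y v))) \<and>
    (\<forall>x y v. \<forall>f\<in>?W. f (sV 2 (mu (br x y) v)) = f (mu x (rho y v) - mu y (rho x v)))"
    by (auto simp: dual_op_def dual_scale_def fun_eq_iff f_add f_scale f_diff algebra_simps)
  finally show ?thesis
    by (simp add: dual_eq_iff)
qed

end

lemma (in tp_algebra) tp_representation_adjoint: "tp_representation sA mult br sA mult br"
proof -
  have "sA 2 (mult (br x y) z) = br x (mult y z) - br y (mult x z)" for x y z
    using compatibility[of z x y] br_antisym[of "mult z x" y] by (simp add: mult_commute)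
  then show ?thesis
    unfolding tp_representation_def tp_representation_axioms_def tp_rep_def
    using tp_algebra_axioms A.vector_space_axioms A.subspace_UNIV
    by (simp add: mult_linear_left mult_linear_right br_linear_left br_linear_right
        mult_assoc br_br_left compatibility)
qed

lemma (in tp_algebra) adjoint_conditions_iff:
  "((\<forall>x y v. mult (br x y) v = 0) \<and> (\<forall>x y v. br (mult x y) v = mult x (br y v))) \<longleftrightarrow>
    (\<forall>x y z. br x (mult y z) = 0 \<and> mult x (br y z) = 0)"
proof
  assume "(\<forall>x y v. mult (br x y) v = 0) \<and> (\<forall>x y v. br (mult x y) v = mult x (br y v))"
  then have br_ideal: "mult (br x y) v = 0" and br_mult: "br (mult x y) v = mult x (br y v)"
    for x y v
    by blast+
  show "\<forall>x y z. br x (mult y z) = 0 \<and> mult x (br y z) = 0"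
  proof (intro allI conjI)
    fix x y z
    show "mult x (br y z) = 0"
      using br_ideal[of y z x] by (simp add: mult_commute)
    have "br x (mult y z) = - mult y (br z x)"
      using br_antisym[of x "mult y z"] br_mult[of y z x] by simp
    then show "br x (mult y z) = 0"
      using br_ideal[of z x y] by (simp add: mult_commute)
  qed
next
  assume "\<forall>x y z. br x (mult y z) = 0 \<and> mult x (br y z) = 0"
  then have br_mult_0: "br x (mult y z) = 0" and mult_br_0: "mult x (br y z) = 0" for x y z
    by blast+
  show "(\<forall>x y v. mult (br x y) v = 0) \<and> (\<forall>x y v. br (mult x y) v = mult x (br y v))"
  proof (intro allI conjI)
    fix x y v
    show "mult (br x y) v = 0"
      using mult_br_0 by (simp add: mult_commute)
    show "br (mult x y) v = mult x (br y v)"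
      using br_antisym[of "mult x y" v] br_mult_0 mult_br_0 by simp
  qed
qed

lemma tp_rep_dual_iff_conditions:
  fixes sV :: "'k::field_char_0 \<Rightarrow> 'v::ab_group_add \<Rightarrow> 'v"
  assumes "tp_representation sA mult br sV mu rho"
  shows "tp_rep sA mult br dual_scale (dual_space sV) (\<lambda>x f. - dual_op mu x f) (dual_op rho) \<longleftrightarrow>
    (\<forall>x y v. mu (br x y) v = 0) \<and> (\<forall>x y v. rho (mult x y) v = mu x (rho y v))"
proof -
  interpret tp_representation sA mult br sV mu rho
    by fact
  have scale_2: "sV 2 w = w + w" and scale_3: "sV 3 w = w + w + w" for w
    using V.scale_left_distrib[of 1 1 w] V.scale_left_distrib[of 2 1 w] by simp_all
  show ?thesis
    unfolding tp_rep_dual_iff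
  proof (intro iffI conjI allI; (elim conjE)?)
    assume dual_mu_rho: "\<forall>x y v. sV 2 (rho y (mu x v)) = rho (mult x y) v + mu x (rho y v)"
      and dual_mu_br: "\<forall>x y v. sV 2 (mu (br x y) v) = mu x (rho y v) - mu y (rho x v)"
    have mu_rho_commute: "rho y (mu x v) = mu x (rho y v)" for x y v
    proof -
      have dual: "rho y (mu x v) + rho y (mu x v) = rho (mult x y) v + mu x (rho y v)"
        using dual_mu_rho by (simp add: scale_2)
      have orig: "mu x (rho y v) + mu x (rho y v) = rho (mult x y) v + rho y (mu x v)"
        using mu_rho[of x y v] by (simp add: scale_2)
      have "sV 3 (rho y (mu x v) - mu x (rho y v))
          = (rho y (mu x v) + rho y (mu x v)) - (mu x (rho y v) + mu x (rho y v))
            + (rho y (mu x v) - mu x (rho y v))"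
        by (simp add: scale_3 algebra_simps)
      also have "\<dots> = 0"
        unfolding dual orig by (simp add: algebra_simps)
      finally show ?thesis
        by simp
    qed
    show "rho (mult x y) v = mu x (rho y v)" for x y v
      using mu_rho[of x y v] mu_rho_commute by (simp add: scale_2)
    show "mu (br x y) v = 0" for x y v
    proof -
      have "sV 2 (mu (br x y) v) = mu x (rho y v) - mu y (rho x v)"
        using dual_mu_br by blast
      moreover have "sV 2 (mu (br x y) v) = mu y (rho x v) - mu x (rho y v)"
        using mu_br[of x y v] mu_rho_commute by simp
      ultimately have "sV 2 (mu (br x y) v) + sV 2 (mu (br x y) v)
          = (mu x (rho y v) - mu y (rho x v)) + (mu y (rho x v) - mu x (rho y v))"
        by (rule arg_cong2[where f = "(+)"])
      then have "sV 2 (sV 2 (mu (br x y) v)) = 0"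
        by (simp add: scale_2)
      then show ?thesis
        by simp
    qed
  next
    fix x y v
    assume mu_br_0: "\<forall>x y v. mu (br x y) v = 0"
      and rho_mult: "\<forall>x y v. rho (mult x y) v = mu x (rho y v)"
    have mu_rho_commute: "rho y (mu x v) = mu x (rho y v)"
      using mu_rho[of x y v] rho_mult by (simp add: scale_2)
    then show "sV 2 (rho y (mu x v)) = rho (mult x y) v + mu x (rho y v)"
      using rho_mult by (simp add: scale_2)
    have "mu x (rho y v) = mu y (rho x v)"
      using rho_mult mult_commute[of x y] by metis
    then show "sV 2 (mu (br x y) v) = mu x (rho y v) - mu y (rho x v)"
      using mu_br_0 by simp
  qed
qed

theorem mainTheorem16:
  fixes sA :: "'k::field_char_0 \<Rightarrow> 'a::ab_group_add \<Rightarrow> 'a"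
    and mult br :: "'a \<Rightarrow> 'a \<Rightarrow> 'a"
    and sV :: "'k \<Rightarrow> 'v::ab_group_add \<Rightarrow> 'v"
    and mu rho :: "'a \<Rightarrow> 'v \<Rightarrow> 'v"
  assumes tpa: "transposed_poisson sA mult br"
    and finA: "\<exists>B. finite_dimensional_vector_space sA B"
    and finV: "\<exists>B. finite_dimensional_vector_space sV B"
    and rep: "tp_rep sA mult br sV UNIV mu rho"
  shows "(tp_rep sA mult br dual_scale (dual_space sV) (\<lambda>x f. - dual_op mu x f) (dual_op rho)
            \<longleftrightarrow> (\<forall>x y v. mu (br x y) v = 0) \<and> (\<forall>x y v. rho (mult x y) v = mu x (rho y v)))
         \<and> (tp_rep sA mult br dual_scale (dual_space sA) (\<lambda>x f. - dual_op mult x f) (dual_op br)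
            \<longleftrightarrow> (\<forall>x y z. br x (mult y z) = 0 \<and> mult x (br y z) = 0))"
proof -
  interpret tp_algebra sA mult br
    by (rule tp_algebra.intro) (fact tpa)
  have "tp_representation sA mult br sV mu rho"
    by unfold_locales (fact rep)
  then show ?thesis
    using tp_rep_dual_iff_conditions[OF tp_representation_adjoint] adjoint_conditions_iff
    by (simp add: tp_rep_dual_iff_conditions)
qed

end
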